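(* There exist a unique length-preserving map $u\mapsto w_u$ from $\{0,1,2\}^*$ to $\{0,1\}^*$ and a unique map $u\mapsto s_u$ from $\{0,1,2\}^*$ to $\mathcal{S}$ such that for every $u\in\{0,1,2\}^*$: $w_u$ is a prefix of $w_{ua}$ for every $a\in\{0,1,2\}$, and $\mathrm{val}_{\mathcal{F}}(u)=\mathrm{val}_{\mathcal{F}}(w_us_u)$. Moreover, there is a unique map $\lambda:\{0,1,2\}^+\to\{0,1\}$, $v\mapsto\lambda_v$, such that $w_{ua}=w_u\lambda_{ua}$ for every $u\in\{0,1,2\}^*$ and $a\in\{0,1,2\}$.
   Context: Fibonacci numbers: $F_0=1$, $F_1=2$, $F_n=F_{n-1}+F_{n-2}$ for $n\ge2$. For a word $w=w_{k-1}\cdots w_0$ over $\{0,1,2\}$ (digits indexed from the right), $\mathrm{val}_{\mathcal{F}}(w)=\sum_{i=0}^{k-1}w_iF_i$. $\mathcal{S}=\{000,001,010,100,101\}$. *)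

theory Defs
  imports Main "HOL-Library.Sublist"
begin

fun fibF :: "nat \<Rightarrow> nat" where
  "fibF 0 = 1"
| "fibF (Suc 0) = 2"
| "fibF (Suc (Suc n)) = fibF (Suc n) + fibF n"

text \<open>Words are lists written left to right, w = w_{k-1} ... w_0; the last list
  element is the digit of index 0. valF w = sum of w_i * F i.\<close>
fun valF :: "nat list \<Rightarrow> nat" where
  "valF [] = 0"
| "valF (d # ds) = d * fibF (length ds) + valF ds"

definition words3 :: "nat list set" where
  "words3 = {u. set u \<subseteq> {0, 1, 2}}"

definition words2 :: "nat list set" where
  "words2 = {u. set u \<subseteq> {0, 1}}"

definition Sset :: "nat list set" where
  "Sset = {[0,0,0], [0,0,1], [0,1,0], [1,0,0], [1,0,1]}"

definition good_ws :: "(nat list \<Rightarrow> nat list) \<Rightarrow> (nat list \<Rightarrow> nat list) \<Rightarrow> bool" where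
  "good_ws w s \<longleftrightarrow>
     (\<forall>u \<in> words3.
        w u \<in> words2 \<and> length (w u) = length u \<and> s u \<in> Sset \<and>
        (\<forall>a \<in> {0, 1, 2}. prefix (w u) (w (u @ [a]))) \<and>
        valF u = valF (w u @ s u))"

end

theory Submission
  imports Defs
begin

text \<open>Appending a digit c and a word s \<in> S to a word x adds 5c + val s to val (x 0000),
  and since val is injective on S with values below 5 this determines c and s; so w and s
  are unique by induction on u. For existence, a transducer reads u from left to right and
  keeps as carry the two differences val u - val (w 000) and val' u - val' (w 000), where
  val' is the value with respect to the shifted sequence F_{i-1}. The carry stays in a fixed
  set of ten pairs whose first component lies in 0..4, hence is the value of some s \<in> S.\<close>

lemma valF_replicate_zero: "valF (replicate n 0) = 0"
  by (induction n) auto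

lemma valF_append: "valF (x @ y) = valF (x @ replicate (length y) 0) + valF y"
  by (induction x) (auto simp: valF_replicate_zero)

lemma valF_append_Cons_length3:
  assumes "length s = 3"
  shows "valF (x @ c # s) = valF (x @ [0, 0, 0, 0]) + 5 * c + valF s"
proof -
  have "replicate (length (c # s)) (0::nat) = [0, 0, 0, 0]"
    using assms by (simp add: numeral_eq_Suc)
  then show ?thesis
    using valF_append[of x "c # s"] assms by (simp add: numeral_eq_Suc)
qed

text \<open>fibF_pred n is F_{n-1}; the choice F_{-1} = 1 keeps the recurrence F_1 = F_0 + F_{-1}.\<close>
fun fibF_pred :: "nat \<Rightarrow> nat" where
  "fibF_pred 0 = 1"
| "fibF_pred (Suc n) = fibF n"

lemma fibF_Suc: "fibF (Suc n) = fibF n + fibF_pred n"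
  by (cases n) auto

fun valF_pred :: "nat list \<Rightarrow> nat" where
  "valF_pred [] = 0"
| "valF_pred (d # ds) = d * fibF_pred (length ds) + valF_pred ds"

lemma valF_snoc: "valF (x @ [d]) = valF x + valF_pred x + d"
  by (induction x) (auto simp: fibF_Suc algebra_simps)

lemma valF_pred_snoc: "valF_pred (x @ [d]) = valF x + d"
  by (induction x) auto

lemma valF_pred_append: "valF_pred (x @ y) = valF_pred (x @ replicate (length y) 0) + valF_pred y"
proof -
  have "valF_pred (replicate n 0) = 0" for n
    by (induction n) auto
  then show ?thesis
    by (induction x) auto
qed

lemma valF_shift_digit:
  "valF (w @ [b, 0, 0, 0]) = valF (w @ [0, 0, 0]) + valF_pred (w @ [0, 0, 0]) + 5 * b"
  using valF_append[of w "[b, 0, 0, 0]"] valF_snoc[of "w @ [0, 0, 0]" 0]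
  by (simp add: numeral_eq_Suc)

lemma valF_pred_shift_digit:
  "valF_pred (w @ [b, 0, 0, 0]) = valF (w @ [0, 0, 0]) + 3 * b"
  using valF_pred_append[of w "[b, 0, 0, 0]"] valF_pred_snoc[of "w @ [0, 0, 0]" 0]
  by (simp add: numeral_eq_Suc)

definition Sset_word :: "nat \<Rightarrow> nat list" where
  "Sset_word n = [[0,0,0], [0,0,1], [0,1,0], [1,0,0], [1,0,1]] ! n"

lemma Sset_word: "n < 5 \<Longrightarrow> Sset_word n \<in> Sset \<and> valF (Sset_word n) = n"
  by (auto simp: Sset_word_def Sset_def less_Suc_eq numeral_eq_Suc)

lemma length_Sset: "s \<in> Sset \<Longrightarrow> length s = 3"
  by (auto simp: Sset_def)

lemma valF_Sset_less: "s \<in> Sset \<Longrightarrow> valF s < 5"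
  by (auto simp: Sset_def)

lemma inj_on_valF_Sset: "inj_on valF Sset"
  by (auto simp: inj_on_def Sset_def)

lemma five_mult_add_valF_Sset_inj:
  assumes "s \<in> Sset" "s' \<in> Sset" "5 * c + valF s = 5 * c' + valF s'"
  shows "c = c' \<and> s = s'"
proof -
  have "c = c'" "valF s = valF s'"
    using assms(3) valF_Sset_less[OF assms(1)] valF_Sset_less[OF assms(2)] by presburger+
  then show ?thesis
    using inj_on_valF_Sset assms(1,2) by (simp add: inj_on_eq_iff)
qed

lemma snoc_in_words3_iff: "u @ [a] \<in> words3 \<longleftrightarrow> u \<in> words3 \<and> a \<in> {0, 1, 2}"
  by (auto simp: words3_def)

lemma words3_snocE:
  assumes "v \<in> words3" "v \<noteq> []"
  obtains u a where "v = u @ [a]" "u \<in> words3" "a \<in> {0, 1, 2}"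
  using assms by (cases v rule: rev_cases) (auto simp: snoc_in_words3_iff)

lemma good_wsD:
  assumes "good_ws w s" "u \<in> words3"
  shows "w u \<in> words2" "length (w u) = length u" "s u \<in> Sset"
    "\<And>a. a \<in> {0, 1, 2} \<Longrightarrow> prefix (w u) (w (u @ [a]))"
    "valF u = valF (w u @ s u)"
  using assms unfolding good_ws_def by blast+

lemma good_ws_snoc:
  assumes "good_ws w s" "u \<in> words3" "a \<in> {0, 1, 2}"
  obtains c where "c \<in> {0, 1}" "w (u @ [a]) = w u @ [c]"
proof -
  have ua: "u @ [a] \<in> words3"
    using assms(2,3) by (simp add: snoc_in_words3_iff)
  obtain z where z: "w (u @ [a]) = w u @ z"
    using good_wsD(4)[OF assms] by (auto simp: prefix_def)
  with good_wsD(2)[OF assms(1,2)] good_wsD(2)[OF assms(1) ua] obtain c where "z = [c]"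
    by (cases z) auto
  with z good_wsD(1)[OF assms(1) ua] show ?thesis
    using that by (auto simp: words2_def)
qed

lemma good_ws_snoc_last:
  assumes "good_ws w s" "u \<in> words3" "a \<in> {0, 1, 2}"
  shows "w (u @ [a]) = w u @ [last (w (u @ [a]))]" "last (w (u @ [a])) \<in> {0, 1}"
  using good_ws_snoc[OF assms] by force+

lemma good_ws_last_digit:
  assumes "good_ws w s" "v \<in> words3" "v \<noteq> []"
  shows "last (w v) \<in> {0, 1}"
  using words3_snocE[OF assms(2,3)] good_ws_snoc_last(2)[OF assms(1)] by metis

lemma snoc_letter_eq_last:
  assumes "\<forall>u \<in> words3. \<forall>a \<in> {0, 1, 2}. w (u @ [a]) = w u @ [lam (u @ [a])]"
    and "v \<in> words3" "v \<noteq> []"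
  shows "lam v = last (w v)"
proof -
  obtain u a where "v = u @ [a]" "u \<in> words3" "a \<in> {0, 1, 2}"
    using words3_snocE[OF assms(2,3)] .
  with assms(1) have "w v = w u @ [lam v]"
    by blast
  then show ?thesis
    by simp
qed

lemma good_ws_unique:
  assumes "good_ws w s" "good_ws w' s'" "u \<in> words3"
  shows "w u = w' u \<and> s u = s' u"
  using assms(3)
proof (induction u rule: rev_induct)
  case Nil
  then have "w [] = []" "w' [] = []"
    using good_wsD(2)[OF assms(1) Nil] good_wsD(2)[OF assms(2) Nil] by simp_all
  then show ?case
    using good_wsD(3,5)[OF assms(1) Nil] good_wsD(3,5)[OF assms(2) Nil]
      five_mult_add_valF_Sset_inj[of "s []" "s' []" 0 0] by simp
next
  case (snoc a u)
  have u: "u \<in> words3" and a: "a \<in> {0, 1, 2}"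
    using snoc.prems by (simp_all add: snoc_in_words3_iff)
  obtain c where c: "c \<in> {0, 1}" "w (u @ [a]) = w u @ [c]"
    using good_ws_snoc[OF assms(1) u a] .
  obtain c' where c': "c' \<in> {0, 1}" "w' (u @ [a]) = w u @ [c']"
  proof -
    obtain c' where "c' \<in> {0, 1}" "w' (u @ [a]) = w' u @ [c']"
      using good_ws_snoc[OF assms(2) u a] .
    with snoc.IH[OF u] that show ?thesis
      by simp
  qed
  note S = good_wsD(3)[OF assms(1) snoc.prems] good_wsD(3)[OF assms(2) snoc.prems]
  have "valF (w (u @ [a]) @ s (u @ [a])) = valF (w' (u @ [a]) @ s' (u @ [a]))"
    using good_wsD(5)[OF assms(1) snoc.prems] good_wsD(5)[OF assms(2) snoc.prems] by simp
  then have "5 * c + valF (s (u @ [a])) = 5 * c' + valF (s' (u @ [a]))"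
    unfolding c(2) c'(2) append_assoc append_Cons append_Nil
    using valF_append_Cons_length3[OF length_Sset[OF S(1)], of "w u" c]
      valF_append_Cons_length3[OF length_Sset[OF S(2)], of "w u" c'] by linarith
  then show ?case
    using five_mult_add_valF_Sset_inj[OF S] c(2) c'(2) by simp
qed

definition carry_states :: "(int \<times> int) set" where
  "carry_states = {(0, 0), (0, 1), (1, 0), (1, 1), (2, 1), (2, 2), (3, 2), (3, 3), (4, 2), (4, 3)}"

text \<open>Emitting digit b subtracts F_3 b = 5b from the first carry and F_2 b = 3b from the second
  (valF_shift_digit, valF_pred_shift_digit).\<close>
fun transduce_step :: "(int \<times> int) \<times> nat list \<Rightarrow> nat \<Rightarrow> (int \<times> int) \<times> nat list" where
  "transduce_step ((A, B), w) a =
     (let b = (if A + B + int a < 5 then 0 else 1 :: nat)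
      in ((A + B + int a - 5 * int b, A + int a - 3 * int b), w @ [b]))"

definition transduce :: "nat list \<Rightarrow> (int \<times> int) \<times> nat list" where
  "transduce u = foldl transduce_step ((0, 0), []) u"

lemma transduce_snoc: "transduce (u @ [a]) = transduce_step (transduce u) a"
  by (simp add: transduce_def)

lemma carry_states_closed:
  assumes "(A, B) \<in> carry_states" "a \<in> {0, 1, 2}"
  shows "fst (transduce_step ((A, B), w) a) \<in> carry_states"
proof -
  have "a = 0 \<or> a = 1 \<or> a = 2"
    using assms(2) by auto
  then show ?thesis
    using assms(1) unfolding carry_states_def
    by (elim disjE insertE emptyE) (simp_all add: Let_def)
qed

lemma transduce_invariant:
  assumes "u \<in> words3" "transduce u = ((A, B), w)"
  shows "(A, B) \<in> carry_states \<and> w \<in> words2 \<and> length w = length u \<and>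
    int (valF u) = int (valF (w @ [0, 0, 0])) + A \<and>
    int (valF_pred u) = int (valF_pred (w @ [0, 0, 0])) + B"
  using assms
proof (induction u arbitrary: A B w rule: rev_induct)
  case Nil
  then show ?case
    by (auto simp: transduce_def carry_states_def words2_def)
next
  case (snoc a u)
  obtain A0 B0 w0 where run: "transduce u = ((A0, B0), w0)"
    by (metis prod.collapse)
  have a: "a \<in> {0, 1, 2}" and "u \<in> words3"
    using snoc.prems(1) by (simp_all add: snoc_in_words3_iff)
  with snoc.IH run have IH: "(A0, B0) \<in> carry_states" "w0 \<in> words2" "length w0 = length u"
    "int (valF u) = int (valF (w0 @ [0, 0, 0])) + A0"
    "int (valF_pred u) = int (valF_pred (w0 @ [0, 0, 0])) + B0"
    by blast+
  define b where "b = (if A0 + B0 + int a < 5 then 0 else 1 :: nat)"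
  have step: "A = A0 + B0 + int a - 5 * int b" "B = A0 + int a - 3 * int b" "w = w0 @ [b]"
    using snoc.prems(2) run by (simp_all add: transduce_snoc b_def Let_def)
  have "(A, B) \<in> carry_states"
    using carry_states_closed[OF IH(1) a, of w0] snoc.prems(2) run by (simp add: transduce_snoc)
  moreover have "w \<in> words2"
    using IH(2) step(3) by (auto simp: words2_def b_def)
  ultimately show ?case
    using IH(3-5) step
    by (simp add: valF_snoc valF_pred_snoc valF_shift_digit valF_pred_shift_digit)
qed

definition W :: "nat list \<Rightarrow> nat list" where
  "W u = snd (transduce u)"

lemma W_snoc: "\<exists>b. W (u @ [a]) = W u @ [b]"
proof -
  obtain A B w where "transduce u = ((A, B), w)"
    by (metis prod.collapse)
  then show ?thesis
    by (simp add: W_def transduce_snoc Let_def)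
qed

definition S :: "nat list \<Rightarrow> nat list" where
  "S u = Sset_word (nat (fst (fst (transduce u))))"

lemma good_ws_W_S: "good_ws W S"
  unfolding good_ws_def
proof (rule ballI, intro conjI)
  fix u assume u: "u \<in> words3"
  obtain A B w where run: "transduce u = ((A, B), w)"
    by (metis prod.collapse)
  have W: "W u = w"
    using run by (simp add: W_def)
  have inv: "(A, B) \<in> carry_states" "w \<in> words2" "length w = length u"
    "int (valF u) = int (valF (w @ [0, 0, 0])) + A"
    using transduce_invariant[OF u run] by blast+
  have "0 \<le> A" "A < 5"
    using inv(1) by (auto simp: carry_states_def)
  then have s: "S u \<in> Sset" "int (valF (S u)) = A"
    using Sset_word[of "nat A"] run by (simp_all add: S_def)
  show "W u \<in> words2" "length (W u) = length u" "S u \<in> Sset"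
    using W inv(2,3) s(1) by simp_all
  show "\<forall>a \<in> {0, 1, 2}. prefix (W u) (W (u @ [a]))"
    using W_snoc by (auto intro: prefixI)
  have "valF (W u @ S u) = valF (w @ [0, 0, 0]) + valF (S u)"
    using W valF_append[of w "S u"] length_Sset[OF s(1)] by (simp add: numeral_eq_Suc)
  with inv(4) s(2) show "valF u = valF (W u @ S u)"
    by linarith
qed

theorem proposition5p4:
  shows "\<exists>w s. good_ws w s \<and>
     (\<forall>w' s'. good_ws w' s' \<longrightarrow> (\<forall>u \<in> words3. w' u = w u \<and> s' u = s u)) \<and>
     (\<exists>lam. (\<forall>v \<in> words3. v \<noteq> [] \<longrightarrow> lam v \<in> {0::nat, 1}) \<and>
            (\<forall>u \<in> words3. \<forall>a \<in> {0, 1, 2}. w (u @ [a]) = w u @ [lam (u @ [a])]) \<and>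
            (\<forall>lam'. ((\<forall>v \<in> words3. v \<noteq> [] \<longrightarrow> lam' v \<in> {0::nat, 1}) \<and>
                     (\<forall>u \<in> words3. \<forall>a \<in> {0, 1, 2}. w (u @ [a]) = w u @ [lam' (u @ [a])]))
                \<longrightarrow> (\<forall>v \<in> words3. v \<noteq> [] \<longrightarrow> lam' v = lam v)))"
proof (rule exI[of _ W], rule exI[of _ S], intro conjI exI[of _ "\<lambda>v. last (W v)"])
  show "good_ws W S"
    by (rule good_ws_W_S)
  show "\<forall>w' s'. good_ws w' s' \<longrightarrow> (\<forall>u \<in> words3. w' u = W u \<and> s' u = S u)"
    using good_ws_unique[OF _ good_ws_W_S] by blast
  show "\<forall>v \<in> words3. v \<noteq> [] \<longrightarrow> last (W v) \<in> {0, 1}"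
    using good_ws_last_digit[OF good_ws_W_S] by blast
  show "\<forall>u \<in> words3. \<forall>a \<in> {0, 1, 2}. W (u @ [a]) = W u @ [last (W (u @ [a]))]"
    using good_ws_snoc_last(1)[OF good_ws_W_S] by blast
qed (use snoc_letter_eq_last in blast)

end
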